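(* Let $\Gamma_1,\Gamma_2$ be propositional theories over $\mathcal L$ and let $e\in\{c,a,s,u\}$. Then the following are equivalent: (1) $\Gamma_1\equiv_e\Gamma_2$; (2) $C_e(\Gamma_1)=C_e(\Gamma_2)$; (3) $E_e(\Gamma_1)=E_e(\Gamma_2)$.
   Context: A propositional signature $\mathcal L$ is a set of atoms. Formulas are built from atoms and $\bot$ using $\wedge,\vee,\to$; $\neg\phi$ abbreviates $\phi\to\bot$. A theory is a set of formulas. An HT-interpretation over $\mathcal L$ is a pair $(X,Y)$ with $X\subseteq Y\subseteq\mathcal L$; it is total if $X=Y$. $Y\models\phi$ denotes classical satisfaction. HT-satisfaction: $(X,Y)\models a$ iff $a\in X$ for an atom $a$; $(X,Y)\not\models\bot$; $\wedge,\vee$ componentwise; $(X,Y)\models\phi\to\psi$ iff (i) $(X,Y)\not\models\phi$ or $(X,Y)\models\psi$, and (ii) $Y\models\phi\to\psi$. $(X,Y)\models\Gamma$ iff it satisfies every formula of $\Gamma$. A total $(Y,Y)$ is an equilibrium model of $\Gamma$ iff $(Y,Y)\models\Gamma$ and $(X,Y)\not\models\Gamma$ for all $X\subsetneq Y$; then $Y$ is an answer set of $\Gamma$. A formula is factual if it is built from atoms and $\bot$ using only $\wedge,\vee$ and implications of the form $\phi\to\bot$. For theories $\Gamma_1,\Gamma_2$ over $\mathcal L$: $\Gamma_1\equiv_c\Gamma_2$ iff they have the same classical models; $\Gamma_1\equiv_a\Gamma_2$ iff they have the same answer sets; $\Gamma_1\equiv_s\Gamma_2$ iff for every $\mathcal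 L'\supseteq\mathcal L$ and every theory $\Gamma$ over $\mathcal L'$, $\Gamma_1\cup\Gamma$ and $\Gamma_2\cup\Gamma$ have the same answer sets; $\Gamma_1\equiv_u\Gamma_2$ iff the same holds for every factual theory $\Gamma$ over every $\mathcal L'\supseteq\mathcal L$. $C_s(\Gamma)$ is the set of HT-countermodels of $\Gamma$ (HT-interpretations over $\mathcal L$ not satisfying $\Gamma$). A here-countermodel is an HT-countermodel $(X,Y)$ with $Y\models\Gamma$; $E_s(\Gamma)$ is the set of equivalence interpretations, i.e. total HT-models of $\Gamma$ together with here-countermodels of $\Gamma$. For a set $S$ of HT-interpretations: a total $(Y,Y)$ is total-closed in $S$ if $(X,Y)\in S$ for every $X\subseteq Y$; $(X,Y)$ is closed in $S$ if $(X',Y)\in S$ for every $X\subseteq X'\subseteq Y$; $(X,Y)$ is there-closed in $S$ if $(Y,Y)\notin S$ and $(X',Y)\in S$ for every $X\subseteq X'\subsetneq Y$. Define: $C_c(\Gamma)$, $E_c(\Gamma)$ = the total interpretations in $C_s(\Gamma)$, resp. $E_s(\Gamma)$; $C_a(\Gamma)$ = the set of HT-interpretations of the form $(\emptyset,Y)$ that are there-closed in $C_s(\Gamma)$; $E_a(\Gamma)$ = the set of total interpretations that are total-closed in $E_s(\Gamma)$; $C_u(\Gamma)$ = the set of HT-interpretations that are there-closed in $C_s(\Gamma)$; $E_u(\Gamma)$ = the set of HT-interpretations that are closed in $E_s(\Gamma)$. *)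

theory Defs
  imports Main
begin

datatype 'a form = Atom 'a | Bot | And "'a form" "'a form" | Or "'a form" "'a form"
  | Imp "'a form" "'a form"

definition Neg :: "'a form \<Rightarrow> 'a form" where
  "Neg \<phi> = Imp \<phi> Bot"

fun atoms :: "'a form \<Rightarrow> 'a set" where
  "atoms (Atom a) = {a}"
| "atoms Bot = {}"
| "atoms (And \<phi> \<psi>) = atoms \<phi> \<union> atoms \<psi>"
| "atoms (Or \<phi> \<psi>) = atoms \<phi> \<union> atoms \<psi>"
| "atoms (Imp \<phi> \<psi>) = atoms \<phi> \<union> atoms \<psi>"

definition theory_over :: "'a set \<Rightarrow> 'a form set \<Rightarrow> bool" where
  "theory_over L \<Gamma> \<longleftrightarrow> (\<forall>\<phi>\<in>\<Gamma>. atoms \<phi> \<subseteq> L)"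

inductive factual :: "'a form \<Rightarrow> bool" where
  "factual (Atom a)"
| "factual Bot"
| "factual \<phi> \<Longrightarrow> factual \<psi> \<Longrightarrow> factual (And \<phi> \<psi>)"
| "factual \<phi> \<Longrightarrow> factual \<psi> \<Longrightarrow> factual (Or \<phi> \<psi>)"
| "factual \<phi> \<Longrightarrow> factual (Imp \<phi> Bot)"

fun csat :: "'a set \<Rightarrow> 'a form \<Rightarrow> bool" where
  "csat Y (Atom a) = (a \<in> Y)"
| "csat Y Bot = False"
| "csat Y (And \<phi> \<psi>) = (csat Y \<phi> \<and> csat Y \<psi>)"
| "csat Y (Or \<phi> \<psi>) = (csat Y \<phi> \<or> csat Y \<psi>)"
| "csat Y (Imp \<phi> \<psi>) = (csat Y \<phi> \<longrightarrow> csat Y \<psi>)"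

fun htsat :: "'a set \<Rightarrow> 'a set \<Rightarrow> 'a form \<Rightarrow> bool" where
  "htsat X Y (Atom a) = (a \<in> X)"
| "htsat X Y Bot = False"
| "htsat X Y (And \<phi> \<psi>) = (htsat X Y \<phi> \<and> htsat X Y \<psi>)"
| "htsat X Y (Or \<phi> \<psi>) = (htsat X Y \<phi> \<or> htsat X Y \<psi>)"
| "htsat X Y (Imp \<phi> \<psi>) =
     ((\<not> htsat X Y \<phi> \<or> htsat X Y \<psi>) \<and> csat Y (Imp \<phi> \<psi>))"

definition csat_th :: "'a set \<Rightarrow> 'a form set \<Rightarrow> bool" where
  "csat_th Y \<Gamma> \<longleftrightarrow> (\<forall>\<phi>\<in>\<Gamma>. csat Y \<phi>)"

definition htsat_th :: "'a set \<Rightarrow> 'a set \<Rightarrow> 'a form set \<Rightarrow> bool" where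
  "htsat_th X Y \<Gamma> \<longleftrightarrow> (\<forall>\<phi>\<in>\<Gamma>. htsat X Y \<phi>)"

definition ht_interps :: "'a set \<Rightarrow> ('a set \<times> 'a set) set" where
  "ht_interps L = {(X, Y). X \<subseteq> Y \<and> Y \<subseteq> L}"

definition classical_models :: "'a set \<Rightarrow> 'a form set \<Rightarrow> 'a set set" where
  "classical_models L \<Gamma> = {Y. Y \<subseteq> L \<and> csat_th Y \<Gamma>}"

definition equilibrium_model :: "'a set \<Rightarrow> 'a form set \<Rightarrow> 'a set \<Rightarrow> bool" where
  "equilibrium_model L \<Gamma> Y \<longleftrightarrow> Y \<subseteq> L \<and> htsat_th Y Y \<Gamma> \<and>
     (\<forall>X. X \<subset> Y \<longrightarrow> \<not> htsat_th X Y \<Gamma>)"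

definition answer_sets :: "'a set \<Rightarrow> 'a form set \<Rightarrow> 'a set set" where
  "answer_sets L \<Gamma> = {Y. equilibrium_model L \<Gamma> Y}"

datatype eqkind = EqC | EqA | EqS | EqU

definition strongly_equiv :: "'a set \<Rightarrow> 'a form set \<Rightarrow> 'a form set \<Rightarrow> bool" where
  "strongly_equiv L \<Gamma>1 \<Gamma>2 \<longleftrightarrow>
     (\<forall>L' \<Gamma>. L \<subseteq> L' \<longrightarrow> theory_over L' \<Gamma> \<longrightarrow>
        answer_sets L' (\<Gamma>1 \<union> \<Gamma>) = answer_sets L' (\<Gamma>2 \<union> \<Gamma>))"

definition uniformly_equiv :: "'a set \<Rightarrow> 'a form set \<Rightarrow> 'a form set \<Rightarrow> bool" where
  "uniformly_equiv L \<Gamma>1 \<Gamma>2 \<longleftrightarrow>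
     (\<forall>L' \<Gamma>. L \<subseteq> L' \<longrightarrow> theory_over L' \<Gamma> \<longrightarrow> (\<forall>\<phi>\<in>\<Gamma>. factual \<phi>) \<longrightarrow>
        answer_sets L' (\<Gamma>1 \<union> \<Gamma>) = answer_sets L' (\<Gamma>2 \<union> \<Gamma>))"

fun equiv_e :: "eqkind \<Rightarrow> 'a set \<Rightarrow> 'a form set \<Rightarrow> 'a form set \<Rightarrow> bool" where
  "equiv_e EqC L \<Gamma>1 \<Gamma>2 = (classical_models L \<Gamma>1 = classical_models L \<Gamma>2)"
| "equiv_e EqA L \<Gamma>1 \<Gamma>2 = (answer_sets L \<Gamma>1 = answer_sets L \<Gamma>2)"
| "equiv_e EqS L \<Gamma>1 \<Gamma>2 = strongly_equiv L \<Gamma>1 \<Gamma>2"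
| "equiv_e EqU L \<Gamma>1 \<Gamma>2 = uniformly_equiv L \<Gamma>1 \<Gamma>2"

definition Cs :: "'a set \<Rightarrow> 'a form set \<Rightarrow> ('a set \<times> 'a set) set" where
  "Cs L \<Gamma> = {(X, Y) \<in> ht_interps L. \<not> htsat_th X Y \<Gamma>}"

definition Es :: "'a set \<Rightarrow> 'a form set \<Rightarrow> ('a set \<times> 'a set) set" where
  "Es L \<Gamma> = {(X, Y) \<in> ht_interps L.
      (X = Y \<and> htsat_th Y Y \<Gamma>) \<or> (\<not> htsat_th X Y \<Gamma> \<and> csat_th Y \<Gamma>)}"

definition total_closed :: "('a set \<times> 'a set) set \<Rightarrow> 'a set \<times> 'a set \<Rightarrow> bool" where
  "total_closed S I \<longleftrightarrow> fst I = snd I \<and> (\<forall>X. X \<subseteq> snd I \<longrightarrow> (X, snd I) \<in> S)"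

definition closed_in :: "('a set \<times> 'a set) set \<Rightarrow> 'a set \<times> 'a set \<Rightarrow> bool" where
  "closed_in S I \<longleftrightarrow> (\<forall>X'. fst I \<subseteq> X' \<and> X' \<subseteq> snd I \<longrightarrow> (X', snd I) \<in> S)"

definition there_closed :: "('a set \<times> 'a set) set \<Rightarrow> 'a set \<times> 'a set \<Rightarrow> bool" where
  "there_closed S I \<longleftrightarrow> (snd I, snd I) \<notin> S \<and>
     (\<forall>X'. fst I \<subseteq> X' \<and> X' \<subset> snd I \<longrightarrow> (X', snd I) \<in> S)"

fun Ce :: "eqkind \<Rightarrow> 'a set \<Rightarrow> 'a form set \<Rightarrow> ('a set \<times> 'a set) set" where
  "Ce EqC L \<Gamma> = {I \<in> Cs L \<Gamma>. fst I = snd I}"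
| "Ce EqA L \<Gamma> = {I \<in> ht_interps L. fst I = {} \<and> there_closed (Cs L \<Gamma>) I}"
| "Ce EqS L \<Gamma> = Cs L \<Gamma>"
| "Ce EqU L \<Gamma> = {I \<in> ht_interps L. there_closed (Cs L \<Gamma>) I}"

fun Ee :: "eqkind \<Rightarrow> 'a set \<Rightarrow> 'a form set \<Rightarrow> ('a set \<times> 'a set) set" where
  "Ee EqC L \<Gamma> = {I \<in> Es L \<Gamma>. fst I = snd I}"
| "Ee EqA L \<Gamma> = {I \<in> ht_interps L. total_closed (Es L \<Gamma>) I}"
| "Ee EqS L \<Gamma> = Es L \<Gamma>"
| "Ee EqU L \<Gamma> = {I \<in> ht_interps L. closed_in (Es L \<Gamma>) I}"

end

theory Submission
  imports Defs
begin

(*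
  It then describes answer sets of a theory extended by a set of facts X: Y is
  such an answer set iff Y is a model containing X and no X' with X <= X' < Y
  HT-satisfies the theory.  With this, each C_e and E_e is computed explicitly:
  C_c, E_c are the classical non-models and models, C_a, E_a are copies of the
  answer sets, C_s, E_s both determine the HT-models, and C_u = E_u consists of
  the pairs (X, Y) with Y an answer set of the theory plus the facts X.
  Cases c and a are then immediate.  For s we show that strong equivalence is
  HT-equivalence over L, using a separating context theory (facts plus
  implications between atoms) to turn an HT-countermodel into an answer set.
  For u, equal C_u gives uniform equivalence by restricting answer sets under
  factual contexts to the signature L.
*)

section \<open>Here-and-there semantics\<close>

lemma htsat_total [simp]: "htsat Y Y \<phi> = csat Y \<phi>"
  by (induction \<phi>) auto

lemma htsat_persistent: "X \<subseteq> Y \<Longrightarrow> htsat X Y \<phi> \<Longrightarrow> csat Y \<phi>"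
  by (induction \<phi>) auto

lemma csat_restrict: "atoms \<phi> \<subseteq> L \<Longrightarrow> csat Y \<phi> = csat (Y \<inter> L) \<phi>"
  by (induction \<phi>) auto

lemma htsat_restrict: "atoms \<phi> \<subseteq> L \<Longrightarrow> htsat X Y \<phi> = htsat (X \<inter> L) (Y \<inter> L) \<phi>"
proof (induction \<phi>)
  case (Imp \<phi> \<psi>)
  then show ?case using csat_restrict[of \<phi> L Y] csat_restrict[of \<psi> L Y] by auto
qed auto

lemma factual_upward:
  "factual \<phi> \<Longrightarrow> htsat X Y \<phi> \<Longrightarrow> X \<subseteq> X' \<Longrightarrow> X' \<subseteq> Y \<Longrightarrow> htsat X' Y \<phi>"
proof (induction rule: factual.induct)
  case (5 \<phi>)
  then show ?case using htsat_persistent[of X' Y \<phi>] by auto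
qed auto

lemma htsat_th_total [simp]: "htsat_th Y Y \<Gamma> = csat_th Y \<Gamma>"
  unfolding htsat_th_def csat_th_def by simp

lemma htsat_th_persistent: "X \<subseteq> Y \<Longrightarrow> htsat_th X Y \<Gamma> \<Longrightarrow> csat_th Y \<Gamma>"
  unfolding htsat_th_def csat_th_def using htsat_persistent by blast

lemma csat_th_restrict: "theory_over L \<Gamma> \<Longrightarrow> csat_th Y \<Gamma> = csat_th (Y \<inter> L) \<Gamma>"
  unfolding theory_over_def csat_th_def by (metis csat_restrict)

lemma htsat_th_restrict:
  "theory_over L \<Gamma> \<Longrightarrow> htsat_th X Y \<Gamma> = htsat_th (X \<inter> L) (Y \<inter> L) \<Gamma>"
  unfolding theory_over_def htsat_th_def by (metis htsat_restrict)

lemma htsat_th_factual_upward: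
  "\<forall>\<phi>\<in>\<Gamma>. factual \<phi> \<Longrightarrow> htsat_th X Y \<Gamma> \<Longrightarrow> X \<subseteq> X' \<Longrightarrow> X' \<subseteq> Y \<Longrightarrow> htsat_th X' Y \<Gamma>"
  unfolding htsat_th_def using factual_upward by blast

lemma sat_th_Un [simp]:
  "htsat_th X Y (A \<union> B) = (htsat_th X Y A \<and> htsat_th X Y B)"
  "csat_th Y (A \<union> B) = (csat_th Y A \<and> csat_th Y B)"
  unfolding htsat_th_def csat_th_def by auto

lemma sat_th_facts [simp]:
  "htsat_th X Y (Atom ` S) = (S \<subseteq> X)"
  "csat_th Y (Atom ` S) = (S \<subseteq> Y)"
  unfolding htsat_th_def csat_th_def by auto

lemma facts_theory_over: "S \<subseteq> L \<Longrightarrow> theory_over L (Atom ` S)"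
  unfolding theory_over_def by auto

lemma facts_factual: "\<forall>\<phi>\<in>Atom ` S. factual \<phi>"
  by (auto intro: factual.intros)

section \<open>Answer sets\<close>

lemma answer_set_iff:
  "Y \<in> answer_sets L \<Gamma> \<longleftrightarrow> Y \<subseteq> L \<and> csat_th Y \<Gamma> \<and> (\<forall>X. X \<subset> Y \<longrightarrow> \<not> htsat_th X Y \<Gamma>)"
  unfolding answer_sets_def equilibrium_model_def by simp

lemma answer_sets_cong:
  assumes "\<And>X Y. X \<subseteq> Y \<Longrightarrow> htsat_th X Y \<Gamma>1 = htsat_th X Y \<Gamma>2"
  shows "answer_sets L \<Gamma>1 = answer_sets L \<Gamma>2"
proof -
  have "csat_th Y \<Gamma>1 = csat_th Y \<Gamma>2" for Y
    using assms[of Y Y] by simp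
  then show ?thesis
    unfolding set_eq_iff answer_set_iff using assms by (meson psubset_imp_subset)
qed

lemma answer_set_with_facts_iff:
  "Y \<in> answer_sets L (\<Gamma> \<union> Atom ` X) \<longleftrightarrow>
     X \<subseteq> Y \<and> Y \<subseteq> L \<and> csat_th Y \<Gamma> \<and> (\<forall>X'. X \<subseteq> X' \<and> X' \<subset> Y \<longrightarrow> \<not> htsat_th X' Y \<Gamma>)"
  unfolding answer_set_iff by auto

text \<open>Adding all atoms of Y as facts makes Y an answer set iff it is a model;
  this lets answer sets detect classical models.\<close>
lemma answer_set_with_own_facts_iff:
  "Y \<in> answer_sets L (\<Gamma> \<union> Atom ` Y) \<longleftrightarrow> Y \<subseteq> L \<and> csat_th Y \<Gamma>"
  unfolding answer_set_with_facts_iff by auto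

lemma uniformly_equiv_csat:
  assumes "uniformly_equiv L \<Gamma>1 \<Gamma>2" and "Y \<subseteq> L"
  shows "csat_th Y \<Gamma>1 = csat_th Y \<Gamma>2"
  using assms facts_theory_over[OF \<open>Y \<subseteq> L\<close>] facts_factual[of Y]
  unfolding uniformly_equiv_def by (metis answer_set_with_own_facts_iff order_refl)

lemma strongly_equiv_imp_uniformly_equiv:
  "strongly_equiv L \<Gamma>1 \<Gamma>2 \<Longrightarrow> uniformly_equiv L \<Gamma>1 \<Gamma>2"
  unfolding strongly_equiv_def uniformly_equiv_def by blast

lemma Cs_iff: "(X, Y) \<in> Cs L \<Gamma> \<longleftrightarrow> X \<subseteq> Y \<and> Y \<subseteq> L \<and> \<not> htsat_th X Y \<Gamma>"
  unfolding Cs_def ht_interps_def by auto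

lemma Es_iff:
  "(X, Y) \<in> Es L \<Gamma> \<longleftrightarrow> X \<subseteq> Y \<and> Y \<subseteq> L \<and> csat_th Y \<Gamma> \<and> (X = Y \<or> \<not> htsat_th X Y \<Gamma>)"
  unfolding Es_def ht_interps_def by auto

lemma pair_set_eq_iff: "A = B \<longleftrightarrow> (\<forall>X Y. (X, Y) \<in> A \<longleftrightarrow> (X, Y) \<in> B)"
  by auto

section \<open>The sets C_e and E_e made explicit\<close>

lemma Ce_C: "Ce EqC L \<Gamma> = {(Y, Y) | Y. Y \<subseteq> L \<and> \<not> csat_th Y \<Gamma>}"
  unfolding Ce.simps Cs_def ht_interps_def by auto

lemma Ee_C: "Ee EqC L \<Gamma> = {(Y, Y) | Y. Y \<subseteq> L \<and> csat_th Y \<Gamma>}"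
  unfolding Ee.simps Es_def ht_interps_def by auto

lemma Ce_U: "Ce EqU L \<Gamma> = {(X, Y). Y \<in> answer_sets L (\<Gamma> \<union> Atom ` X)}"
  unfolding pair_set_eq_iff answer_set_with_facts_iff
  by (auto simp: there_closed_def Cs_iff ht_interps_def)

lemma Ee_U: "Ee EqU L \<Gamma> = Ce EqU L \<Gamma>"
  unfolding pair_set_eq_iff Ce_U answer_set_with_facts_iff
  by (auto simp: closed_in_def Es_iff ht_interps_def)

lemma mem_pair_images [simp]:
  "(X, Y) \<in> Pair {} ` A \<longleftrightarrow> X = {} \<and> Y \<in> A"
  "(X, Y) \<in> (\<lambda>Y. (Y, Y)) ` A \<longleftrightarrow> X = Y \<and> Y \<in> A"
  by auto

text \<open>Answer-set case: C_a is the part of C_u with empty "here" world, i.e. a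
  copy of the answer sets; likewise E_a is the diagonal copy of the answer sets.\<close>
lemma Ce_A: "Ce EqA L \<Gamma> = Pair {} ` answer_sets L \<Gamma>"
proof -
  have "Ce EqA L \<Gamma> = {I \<in> Ce EqU L \<Gamma>. fst I = {}}"
    by auto
  then show ?thesis
    unfolding Ce_U by auto
qed

lemma total_closed_Es_iff:
  "total_closed (Es L \<Gamma>) (X, Y) \<longleftrightarrow> X = Y \<and> Y \<in> answer_sets L \<Gamma>"
  unfolding total_closed_def answer_set_iff Es_iff by (auto dest: psubset_imp_subset)

lemma Ee_A: "Ee EqA L \<Gamma> = (\<lambda>Y. (Y, Y)) ` answer_sets L \<Gamma>"
  unfolding pair_set_eq_iff by (auto simp: total_closed_Es_iff ht_interps_def answer_set_iff)

lemma diagonal_eq_iff: "{(Y, Y) | Y. P Y} = {(Y, Y) | Y. Q Y} \<longleftrightarrow> (\<forall>Y. P Y = Q Y)"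
  by (auto simp: set_eq_iff)

lemma characterisation_C:
  "(equiv_e EqC L \<Gamma>1 \<Gamma>2 \<longleftrightarrow> Ce EqC L \<Gamma>1 = Ce EqC L \<Gamma>2) \<and>
   (Ce EqC L \<Gamma>1 = Ce EqC L \<Gamma>2 \<longleftrightarrow> Ee EqC L \<Gamma>1 = Ee EqC L \<Gamma>2)"
proof -
  let ?same_models = "\<forall>Y. Y \<subseteq> L \<longrightarrow> csat_th Y \<Gamma>1 = csat_th Y \<Gamma>2"
  have "equiv_e EqC L \<Gamma>1 \<Gamma>2 \<longleftrightarrow> ?same_models"
    by (auto simp: classical_models_def set_eq_iff)
  moreover have "Ce EqC L \<Gamma>1 = Ce EqC L \<Gamma>2 \<longleftrightarrow> ?same_models"
    unfolding Ce_C diagonal_eq_iff by auto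
  moreover have "Ee EqC L \<Gamma>1 = Ee EqC L \<Gamma>2 \<longleftrightarrow> ?same_models"
    unfolding Ee_C diagonal_eq_iff by auto
  ultimately show ?thesis by blast
qed

text \<open>C_a and E_a are injective images of the answer sets.\<close>
lemma characterisation_A:
  "(equiv_e EqA L \<Gamma>1 \<Gamma>2 \<longleftrightarrow> Ce EqA L \<Gamma>1 = Ce EqA L \<Gamma>2) \<and>
   (Ce EqA L \<Gamma>1 = Ce EqA L \<Gamma>2 \<longleftrightarrow> Ee EqA L \<Gamma>1 = Ee EqA L \<Gamma>2)"
proof -
  have inj_empty: "inj (Pair ({} :: 'a set))" and inj_diag: "inj (\<lambda>Y :: 'a set. (Y, Y))"
    by (auto intro: injI)
  show ?thesis
    unfolding Ce_A Ee_A equiv_e.simps inj_image_eq_iff[OF inj_empty] inj_image_eq_iff[OF inj_diag]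
    by simp
qed

section \<open>Strong equivalence\<close>

definition ht_equiv :: "'a set \<Rightarrow> 'a form set \<Rightarrow> 'a form set \<Rightarrow> bool" where
  "ht_equiv L \<Gamma>1 \<Gamma>2 \<longleftrightarrow>
     (\<forall>X Y. X \<subseteq> Y \<longrightarrow> Y \<subseteq> L \<longrightarrow> (htsat_th X Y \<Gamma>1 \<longleftrightarrow> htsat_th X Y \<Gamma>2))"

lemma Cs_eq_iff_ht_equiv: "Cs L \<Gamma>1 = Cs L \<Gamma>2 \<longleftrightarrow> ht_equiv L \<Gamma>1 \<Gamma>2"
  unfolding pair_set_eq_iff Cs_iff ht_equiv_def by blast

text \<open>E_s determines the classical models (total members) and hence, by
  persistence, all HT-models.\<close>
lemma Es_eq_iff_ht_equiv: "Es L \<Gamma>1 = Es L \<Gamma>2 \<longleftrightarrow> ht_equiv L \<Gamma>1 \<Gamma>2"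
proof
  assume Es_eq: "Es L \<Gamma>1 = Es L \<Gamma>2"
  show "ht_equiv L \<Gamma>1 \<Gamma>2"
    unfolding ht_equiv_def
  proof (intro allI impI)
    fix X Y :: "'a set"
    assume "X \<subseteq> Y" and "Y \<subseteq> L"
    have "(Y, Y) \<in> Es L \<Gamma>1 \<longleftrightarrow> (Y, Y) \<in> Es L \<Gamma>2" and "(X, Y) \<in> Es L \<Gamma>1 \<longleftrightarrow> (X, Y) \<in> Es L \<Gamma>2"
      using Es_eq by simp_all
    then show "htsat_th X Y \<Gamma>1 = htsat_th X Y \<Gamma>2"
      using \<open>X \<subseteq> Y\<close> \<open>Y \<subseteq> L\<close> htsat_th_persistent unfolding Es_iff by fastforce
  qed
next
  assume "ht_equiv L \<Gamma>1 \<Gamma>2"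
  then show "Es L \<Gamma>1 = Es L \<Gamma>2"
    unfolding pair_set_eq_iff Es_iff ht_equiv_def by (metis htsat_th_total order_refl)
qed

text \<open>HT-equivalence over L suffices for strong equivalence: by locality the
  HT-models agree over every larger signature, hence so do those of every
  extension, and answer sets only depend on HT-models.\<close>
lemma ht_equiv_imp_strongly_equiv:
  assumes over1: "theory_over L \<Gamma>1" and over2: "theory_over L \<Gamma>2"
    and equiv: "ht_equiv L \<Gamma>1 \<Gamma>2"
  shows "strongly_equiv L \<Gamma>1 \<Gamma>2"
  unfolding strongly_equiv_def
proof (intro allI impI)
  fix L' :: "'a set" and \<Gamma> :: "'a form set"
  have same_ht_models: "htsat_th X Y \<Gamma>1 = htsat_th X Y \<Gamma>2" if "X \<subseteq> Y" for X Y
  proof -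
    have "X \<inter> L \<subseteq> Y \<inter> L"
      using that by blast
    then have "htsat_th (X \<inter> L) (Y \<inter> L) \<Gamma>1 = htsat_th (X \<inter> L) (Y \<inter> L) \<Gamma>2"
      using equiv unfolding ht_equiv_def by blast
    then show ?thesis
      using htsat_th_restrict[OF over1, of X Y] htsat_th_restrict[OF over2, of X Y] by simp
  qed
  show "answer_sets L' (\<Gamma>1 \<union> \<Gamma>) = answer_sets L' (\<Gamma>2 \<union> \<Gamma>)"
    by (rule answer_sets_cong) (simp add: same_ht_models)
qed

text \<open>The separating theory for X < Y: the facts X together with all
  implications between atoms of Y - X.  Its only HT-models (_, Y) are (X, Y)
  and (Y, Y).\<close>
definition separating_theory :: "'a set \<Rightarrow> 'a set \<Rightarrow> 'a form set" where
  "separating_theory X Y = Atom ` X \<union> {Imp (Atom a) (Atom b) | a b. a \<in> Y - X \<and> b \<in> Y - X}"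

lemma htsat_th_atom_implications:
  assumes "S \<subseteq> Y"
  shows "htsat_th X' Y {Imp (Atom a) (Atom b) | a b. a \<in> S \<and> b \<in> S} \<longleftrightarrow>
     (\<forall>a\<in>S. \<forall>b\<in>S. a \<in> X' \<longrightarrow> b \<in> X')"
proof -
  have "htsat_th X' Y {Imp (Atom a) (Atom b) | a b. a \<in> S \<and> b \<in> S} \<longleftrightarrow>
      (\<forall>a\<in>S. \<forall>b\<in>S. htsat X' Y (Imp (Atom a) (Atom b)))"
    unfolding htsat_th_def by blast
  then show ?thesis using assms by auto
qed

lemma htsat_separating_theory:
  assumes "X' \<subseteq> Y"
  shows "htsat_th X' Y (separating_theory X Y) \<longleftrightarrow> X \<subseteq> X' \<and> (X' = X \<or> X' = Y)"
proof -
  have "htsat_th X' Y (separating_theory X Y) \<longleftrightarrow>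
      X \<subseteq> X' \<and> (\<forall>a\<in>Y - X. \<forall>b\<in>Y - X. a \<in> X' \<longrightarrow> b \<in> X')"
    unfolding separating_theory_def sat_th_Un sat_th_facts htsat_th_atom_implications[OF Diff_subset] ..
  also have "\<dots> \<longleftrightarrow> X \<subseteq> X' \<and> (X' = X \<or> X' = Y)"
    using assms by blast
  finally show ?thesis .
qed

lemma separating_theory_over: "X \<subseteq> Y \<Longrightarrow> Y \<subseteq> L \<Longrightarrow> theory_over L (separating_theory X Y)"
  unfolding separating_theory_def theory_over_def by auto

lemma answer_set_separating_theory_iff:
  assumes "X \<subset> Y" and "Y \<subseteq> L" and "csat_th Y \<Gamma>"
  shows "Y \<in> answer_sets L (\<Gamma> \<union> separating_theory X Y) \<longleftrightarrow> \<not> htsat_th X Y \<Gamma>"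
proof -
  have "csat_th Y (separating_theory X Y)"
    using htsat_separating_theory[of Y Y X] assms(1) by simp
  moreover have "htsat_th X' Y (separating_theory X Y) \<longleftrightarrow> X' = X" if "X' \<subset> Y" for X'
    using htsat_separating_theory[of X' Y X] that assms(1) by auto
  ultimately show ?thesis
    using assms unfolding answer_set_iff sat_th_Un by (metis psubset_imp_subset)
qed

text \<open>Conversely, strongly equivalent theories are HT-equivalent: they have the
  same models (via facts), and a countermodel (X, Y) of one with X < Y is
  detected by the answer set Y after adding the separating theory.\<close>
lemma strongly_equiv_imp_ht_equiv:
  assumes strong: "strongly_equiv L \<Gamma>1 \<Gamma>2"
  shows "ht_equiv L \<Gamma>1 \<Gamma>2"
  unfolding ht_equiv_def
proof (intro allI impI)
  fix X Y :: "'a set"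
  assume "X \<subseteq> Y" and "Y \<subseteq> L"
  have same_models: "csat_th Y \<Gamma>1 = csat_th Y \<Gamma>2"
    using uniformly_equiv_csat[OF strongly_equiv_imp_uniformly_equiv[OF strong] \<open>Y \<subseteq> L\<close>] .
  consider "X = Y" | "X \<subset> Y" "\<not> csat_th Y \<Gamma>1" | "X \<subset> Y" "csat_th Y \<Gamma>1"
    using \<open>X \<subseteq> Y\<close> by blast
  then show "htsat_th X Y \<Gamma>1 = htsat_th X Y \<Gamma>2"
  proof cases
    case 1
    then show ?thesis using same_models by simp
  next
    case 2
    then show ?thesis using same_models htsat_th_persistent \<open>X \<subseteq> Y\<close> by blast
  next
    case 3
    have "answer_sets L (\<Gamma>1 \<union> separating_theory X Y) = answer_sets L (\<Gamma>2 \<union> separating_theory X Y)"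
      using strong separating_theory_over[OF \<open>X \<subseteq> Y\<close> \<open>Y \<subseteq> L\<close>]
      unfolding strongly_equiv_def by blast
    then show ?thesis
      using 3 same_models answer_set_separating_theory_iff[OF \<open>X \<subset> Y\<close> \<open>Y \<subseteq> L\<close>] by blast
  qed
qed

text \<open>All three conditions are HT-equivalence over L.\<close>
lemma characterisation_S:
  assumes "theory_over L \<Gamma>1" and "theory_over L \<Gamma>2"
  shows "(equiv_e EqS L \<Gamma>1 \<Gamma>2 \<longleftrightarrow> Ce EqS L \<Gamma>1 = Ce EqS L \<Gamma>2) \<and>
         (Ce EqS L \<Gamma>1 = Ce EqS L \<Gamma>2 \<longleftrightarrow> Ee EqS L \<Gamma>1 = Ee EqS L \<Gamma>2)"
  using ht_equiv_imp_strongly_equiv[OF assms] strongly_equiv_imp_ht_equiv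
  unfolding equiv_e.simps Ce.simps Ee.simps Cs_eq_iff_ht_equiv Es_eq_iff_ht_equiv by blast

section \<open>Uniform equivalence\<close>

lemma Ce_U_eq_iff:
  "Ce EqU L \<Gamma>1 = Ce EqU L \<Gamma>2 \<longleftrightarrow>
     (\<forall>X. answer_sets L (\<Gamma>1 \<union> Atom ` X) = answer_sets L (\<Gamma>2 \<union> Atom ` X))"
  unfolding Ce_U pair_set_eq_iff by (simp add: set_eq_iff)

lemma answer_sets_facts_outside: "\<not> X \<subseteq> L \<Longrightarrow> answer_sets L (\<Gamma> \<union> Atom ` X) = {}"
  by (auto simp: answer_set_with_facts_iff) blast

text \<open>Uniform equivalence gives equal C_u, by using facts as contexts.\<close>
lemma uniformly_equiv_imp_Ce_U_eq:
  assumes "uniformly_equiv L \<Gamma>1 \<Gamma>2"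
  shows "Ce EqU L \<Gamma>1 = Ce EqU L \<Gamma>2"
  unfolding Ce_U_eq_iff
proof
  fix X :: "'a set"
  show "answer_sets L (\<Gamma>1 \<union> Atom ` X) = answer_sets L (\<Gamma>2 \<union> Atom ` X)"
  proof (cases "X \<subseteq> L")
    case True
    then show ?thesis
      using assms facts_theory_over[OF True] facts_factual[of X]
      unfolding uniformly_equiv_def by blast
  qed (simp add: answer_sets_facts_outside)
qed

text \<open>The factual
  context is harmless because it stays satisfied when X grows.\<close>
lemma answer_set_restrict:
  assumes over: "theory_over L \<Gamma>a" and factual: "\<forall>\<phi>\<in>\<Gamma>. factual \<phi>"
    and answer_set: "Y \<in> answer_sets L' (\<Gamma>a \<union> \<Gamma>)"
    and "X \<subseteq> Y" and context_model: "htsat_th X Y \<Gamma>"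
  shows "Y \<inter> L \<in> answer_sets L (\<Gamma>a \<union> Atom ` (X \<inter> L))"
  unfolding answer_set_with_facts_iff
proof (intro conjI allI impI)
  from answer_set have model: "csat_th Y \<Gamma>a"
    and minimal: "\<forall>X'. X' \<subset> Y \<longrightarrow> \<not> (htsat_th X' Y \<Gamma>a \<and> htsat_th X' Y \<Gamma>)"
    unfolding answer_set_iff by auto
  show "X \<inter> L \<subseteq> Y \<inter> L"
    using \<open>X \<subseteq> Y\<close> by blast
  show "Y \<inter> L \<subseteq> L"
    by blast
  show "csat_th (Y \<inter> L) \<Gamma>a"
    using csat_th_restrict[OF over, of Y] model by simp
  fix X' :: "'a set"
  assume X': "X \<inter> L \<subseteq> X' \<and> X' \<subset> Y \<inter> L"
  show "\<not> htsat_th X' (Y \<inter> L) \<Gamma>a"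
  proof
    assume here: "htsat_th X' (Y \<inter> L) \<Gamma>a"
    define X'' where "X'' = X' \<union> X"
    have restricted: "X'' \<inter> L = X'" and "X \<subseteq> X''" and "X'' \<subseteq> Y"
      using X' \<open>X \<subseteq> Y\<close> unfolding X''_def by auto
    have "htsat_th X'' Y \<Gamma>a"
      using here htsat_th_restrict[OF over, of X'' Y] restricted by simp
    moreover have "htsat_th X'' Y \<Gamma>"
      using htsat_th_factual_upward[OF factual context_model \<open>X \<subseteq> X''\<close> \<open>X'' \<subseteq> Y\<close>] .
    moreover have "X'' \<noteq> Y"
      using restricted X' by auto
    ultimately show False
      using minimal \<open>X'' \<subseteq> Y\<close> by blast
  qed
qed

text \<open>Equal C_u transfers answer sets under factual contexts from one theory to
  the other: both the model condition and minimality are reduced to L by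
  answer_set_restrict.\<close>
lemma Ce_U_eq_transfer_answer_set:
  assumes over_a: "theory_over L \<Gamma>a" and over_b: "theory_over L \<Gamma>b"
    and same: "\<forall>X. answer_sets L (\<Gamma>a \<union> Atom ` X) = answer_sets L (\<Gamma>b \<union> Atom ` X)"
    and factual: "\<forall>\<phi>\<in>\<Gamma>. factual \<phi>"
    and answer_set: "Y \<in> answer_sets L' (\<Gamma>a \<union> \<Gamma>)"
  shows "Y \<in> answer_sets L' (\<Gamma>b \<union> \<Gamma>)"
proof -
  from answer_set have "Y \<subseteq> L'" and model_a: "csat_th Y \<Gamma>a" and model: "csat_th Y \<Gamma>"
    and minimal_a: "\<forall>X. X \<subset> Y \<longrightarrow> \<not> (htsat_th X Y \<Gamma>a \<and> htsat_th X Y \<Gamma>)"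
    unfolding answer_set_iff by auto
  have restricted: "Y \<inter> L \<in> answer_sets L (\<Gamma>b \<union> Atom ` (X \<inter> L))"
    if "X \<subseteq> Y" and "htsat_th X Y \<Gamma>" for X
    using answer_set_restrict[OF over_a factual answer_set that] same by simp
  have "Y \<inter> L \<in> answer_sets L (\<Gamma>b \<union> Atom ` (Y \<inter> L))"
    using restricted[of Y] model by simp
  then have model_b: "csat_th Y \<Gamma>b"
    using csat_th_restrict[OF over_b, of Y] answer_set_with_own_facts_iff by blast
  have "\<not> (htsat_th X Y \<Gamma>b \<and> htsat_th X Y \<Gamma>)" if "X \<subset> Y" for X
  proof
    assume models: "htsat_th X Y \<Gamma>b \<and> htsat_th X Y \<Gamma>"
    have "X \<inter> L \<subseteq> Y \<inter> L"
      using that by blast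
    moreover have "htsat_th (X \<inter> L) (Y \<inter> L) \<Gamma>b"
      using models htsat_th_restrict[OF over_b, of X Y] by simp
    moreover have "\<forall>X'. X \<inter> L \<subseteq> X' \<and> X' \<subset> Y \<inter> L \<longrightarrow> \<not> htsat_th X' (Y \<inter> L) \<Gamma>b"
      using restricted[of X] that models unfolding answer_set_with_facts_iff by blast
    ultimately have "X \<inter> L = Y \<inter> L"
      by blast
    then have "htsat_th X Y \<Gamma>a"
      using htsat_th_restrict[OF over_a, of X Y] csat_th_restrict[OF over_a, of Y] model_a by simp
    then show False
      using minimal_a that models by blast
  qed
  then show ?thesis
    using \<open>Y \<subseteq> L'\<close> model_b model unfolding answer_set_iff by auto
qed

lemma characterisation_U:
  assumes over1: "theory_over L \<Gamma>1" and over2: "theory_over L \<Gamma>2"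
  shows "(equiv_e EqU L \<Gamma>1 \<Gamma>2 \<longleftrightarrow> Ce EqU L \<Gamma>1 = Ce EqU L \<Gamma>2) \<and>
         (Ce EqU L \<Gamma>1 = Ce EqU L \<Gamma>2 \<longleftrightarrow> Ee EqU L \<Gamma>1 = Ee EqU L \<Gamma>2)"
proof -
  have "Ce EqU L \<Gamma>1 = Ce EqU L \<Gamma>2 \<Longrightarrow> uniformly_equiv L \<Gamma>1 \<Gamma>2"
    unfolding Ce_U_eq_iff uniformly_equiv_def
    using Ce_U_eq_transfer_answer_set[OF over1 over2] Ce_U_eq_transfer_answer_set[OF over2 over1]
    by (metis subsetI subset_antisym)
  then show ?thesis
    using uniformly_equiv_imp_Ce_U_eq unfolding equiv_e.simps Ee_U by blast
qed

theorem mainTheorem4: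
  fixes L :: "'a set" and \<Gamma>1 \<Gamma>2 :: "'a form set" and e :: eqkind
  assumes "theory_over L \<Gamma>1" and "theory_over L \<Gamma>2"
  shows "(equiv_e e L \<Gamma>1 \<Gamma>2 \<longleftrightarrow> Ce e L \<Gamma>1 = Ce e L \<Gamma>2) \<and>
         (Ce e L \<Gamma>1 = Ce e L \<Gamma>2 \<longleftrightarrow> Ee e L \<Gamma>1 = Ee e L \<Gamma>2)"
  using characterisation_C characterisation_A characterisation_S[OF assms]
    characterisation_U[OF assms]
  by (cases e) simp_all

end
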